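(* There is an absolute constant $C>0$ such that for every integer $k\ge2$ and every reduced integer of the form $n=2^{a_1}3^{a_2}\cdots p_k^{a_k}$ (with $a_i\ge0$), $$\sum_{1\le i\le k,\ a_i\ge 3}(a_i-2)\le C\,\frac{k^{2/3}}{(\log k)^{1/3}}.$$
   Context: Let $p_i$ denote the $i$-th prime ($p_1=2$). A positive integer $\prod_i p_i^{a_i}$ (with $a_i=0$ for all sufficiently large $i$) is called reduced if $\left\lfloor\frac{a_i+1}{a_j+2}\right\rfloor<\frac{\log p_j}{\log p_i}$ for all $i,j\ne 1$, and $2^{a_1}<8p_j^2$ for every $j$ with $a_j=0$. *)

theory Defs
  imports Complex_Main "HOL-Computational_Algebra.Primes" "HOL-Library.Infinite_Set"
begin

text \<open>The i-th prime, 1-indexed: nth_prime 1 = 2, nth_prime 2 = 3, ...\<close>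
definition nth_prime :: "nat \<Rightarrow> nat" where
  "nth_prime i = enumerate {p::nat. prime p} (i - 1)"

definition expo :: "nat \<Rightarrow> nat \<Rightarrow> nat" where
  "expo n i = multiplicity (nth_prime i) n"

definition reduced :: "nat \<Rightarrow> bool" where
  "reduced n \<longleftrightarrow> n > 0 \<and>
    (\<forall>i j. i \<ge> 2 \<longrightarrow> j \<ge> 2 \<longrightarrow>
       real_of_int \<lfloor>(real (expo n i) + 1) / (real (expo n j) + 2)\<rfloor>
         < ln (real (nth_prime j)) / ln (real (nth_prime i))) \<and>
    (\<forall>j \<ge> 1. expo n j = 0 \<longrightarrow> (2::real) ^ expo n 1 < 8 * (real (nth_prime j))^2)"

end

theory Submission
  imports Defs
begin

text \<open>
  Write \<open>P\<close> for the prime \<open>p\<^sub>k\<^sub>+\<^sub>1\<close>, at which the exponent of \<open>n\<close> vanishes. Taking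
  \<open>j = k + 1\<close> in the definition of a reduced number gives \<open>2\<^bsup>a\<^sub>1\<^esup> < 8 P\<^sup>2\<close> and, for
  \<open>i \<ge> 2\<close>, \<open>\<lfloor>(a\<^sub>i + 1)/2\<rfloor> < log P / log p\<^sub>i\<close>. Hence every \<open>a\<^sub>i \<le> 3 + 2 log\<^sub>2 P\<close>, and
  \<open>a\<^sub>i \<ge> 3\<close> forces \<open>p\<^sub>i\<^sup>2 < P\<close>, so at most \<open>2 \<surd>P\<close> indices contribute.
  Chebyshev's bound \<open>2\<^sup>m \<le> (2m)\<^bsup>\<pi>(2m)\<^esup>\<close>, read off from the prime factorisation of
  \<open>(2m choose m)\<close> via Legendre's formula, gives \<open>P log 2 \<le> 4 k log P\<close>. The sum is therefore
  \<open>O(\<surd>P log P) = O(\<surd>k (log k)\<^bsup>3/2\<^esup>)\<close>, well below \<open>k\<^bsup>2/3\<^esup> / (log k)\<^bsup>1/3\<^esup>\<close>.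
\<close>

section \<open>Legendre's formula\<close>

lemma multiplicity_lt_self:
  fixes p m :: nat
  assumes "prime p" "m > 0"
  shows "multiplicity p m < m"
proof -
  have "p ^ multiplicity p m \<le> m"
    using assms multiplicity_dvd[of p m] by (simp add: dvd_imp_le)
  moreover have "2 ^ multiplicity p m \<le> p ^ multiplicity p m"
    using assms prime_ge_2_nat power_mono by blast
  moreover have "multiplicity p m < 2 ^ multiplicity p m" by simp
  ultimately show ?thesis by linarith
qed

lemma card_prime_power_divisors:
  fixes p m M :: nat
  assumes "prime p" "m > 0" "multiplicity p m \<le> M"
  shows "card {j\<in>{1..M}. p ^ j dvd m} = multiplicity p m"
proof -
  have "p ^ j dvd m \<longleftrightarrow> j \<le> multiplicity p m" for j
    using assms by (intro power_dvd_iff_le_multiplicity) (auto simp: prime_gt_1_nat)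
  then have "{j\<in>{1..M}. p ^ j dvd m} = {1..multiplicity p m}"
    using assms(3) by (intro set_eqI iffI) auto
  then show ?thesis by simp
qed

lemma Suc_div_eq: "Suc n div (q::nat) = (if q dvd Suc n then 1 else 0) + n div q"
  by (simp add: div_Suc dvd_eq_mod_eq_0)

lemma multiplicity_fact:
  fixes p :: nat
  assumes "prime p" and "n \<le> M"
  shows "multiplicity p (fact n :: nat) = (\<Sum>j\<in>{1..M}. n div p ^ j)"
  using assms(2)
proof (induction n)
  case 0
  then show ?case by simp
next
  case (Suc n)
  have "multiplicity p (fact (Suc n) :: nat) = multiplicity p (Suc n * fact n)"
    by (simp add: fact_Suc)
  also have "\<dots> = multiplicity p (Suc n) + multiplicity p (fact n :: nat)"
    using assms(1) by (subst prime_elem_multiplicity_mult_distrib) auto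
  also have "multiplicity p (Suc n) = card {j\<in>{1..M}. p ^ j dvd Suc n}"
    using card_prime_power_divisors[OF assms(1), of "Suc n" M]
      multiplicity_lt_self[OF assms(1), of "Suc n"] Suc.prems by simp
  also have "\<dots> = (\<Sum>j\<in>{1..M}. if p ^ j dvd Suc n then 1 else 0)"
    using sum.inter_filter[of "{1..M}" "\<lambda>_. 1::nat" "\<lambda>j. p ^ j dvd Suc n"] by simp
  also have "multiplicity p (fact n :: nat) = (\<Sum>j\<in>{1..M}. n div p ^ j)"
    using Suc by simp
  also have "(\<Sum>j\<in>{1..M}. if p ^ j dvd Suc n then 1 else 0) + (\<Sum>j\<in>{1..M}. n div p ^ j)
               = (\<Sum>j\<in>{1..M}. Suc n div p ^ j)"
    by (simp add: sum.distrib[symmetric] Suc_div_eq)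
  finally show ?case .
qed

section \<open>Chebyshev's lower bound for the prime counting function\<close>

lemma double_div_le: "2 * n div (q::nat) \<le> 2 * (n div q) + 1"
proof (cases "q = 0")
  case False
  have "2 * n = 2 * (n mod q) + 2 * (n div q) * q"
    by (metis add_mult_distrib2 mod_div_mult_eq mult.assoc)
  then have "2 * n div q = 2 * (n div q) + 2 * (n mod q) div q"
    using False by (metis div_mult_self1)
  moreover have "2 * (n mod q) div q < 2"
    using False by (simp add: less_mult_imp_div_less)
  ultimately show ?thesis by linarith
qed simp

lemma multiplicity_central_binomial:
  fixes p n :: nat
  assumes "prime p"
  shows "(\<Sum>j\<in>{1..2*n}. 2 * n div p ^ j)
           = 2 * (\<Sum>j\<in>{1..2*n}. n div p ^ j) + multiplicity p (2 * n choose n)"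
proof -
  have "fact n * fact n * (2 * n choose n) = (fact (2 * n) :: nat)"
    using binomial_fact_lemma[of n "2 * n"] by simp
  then have "multiplicity p (fact (2 * n) :: nat)
               = multiplicity p (fact n * fact n * (2 * n choose n) :: nat)"
    by simp
  also have "\<dots> = 2 * multiplicity p (fact n :: nat) + multiplicity p (2 * n choose n)"
    using assms by (simp add: prime_elem_multiplicity_mult_distrib)
  finally have "multiplicity p (fact (2 * n) :: nat)
               = 2 * multiplicity p (fact n :: nat) + multiplicity p (2 * n choose n)" .
  then show ?thesis
    using multiplicity_fact[OF assms, of n "2 * n"] multiplicity_fact[OF assms, of "2 * n" "2 * n"]
    by simp
qed

lemma prime_power_multiplicity_central_binomial_le:
  fixes p n :: nat
  assumes p: "prime p" and n: "n \<ge> 1"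
  shows "p ^ multiplicity p (2 * n choose n) \<le> 2 * n"
proof (rule ccontr)
  define v where "v = multiplicity p (2 * n choose n)"
  assume "\<not> ?thesis"
  then have big: "p ^ v > 2 * n" by (simp add: v_def)
  have term_le: "2 * n div p ^ j \<le> 2 * (n div p ^ j) + (if j < v then 1 else 0)" for j
  proof (cases "j < v")
    case True
    then show ?thesis using double_div_le[of n "p ^ j"] by simp
  next
    case False
    then have "p ^ v \<le> p ^ j" using p prime_gt_1_nat by (simp add: power_increasing)
    then show ?thesis using big by simp
  qed
  have "2 * (\<Sum>j\<in>{1..2*n}. n div p ^ j) + v = (\<Sum>j\<in>{1..2*n}. 2 * n div p ^ j)"
    using multiplicity_central_binomial[OF p] by (simp add: v_def)
  also have "\<dots> \<le> (\<Sum>j\<in>{1..2*n}. 2 * (n div p ^ j) + (if j < v then 1 else 0))"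
    by (rule sum_mono) (rule term_le)
  also have "\<dots> = 2 * (\<Sum>j\<in>{1..2*n}. n div p ^ j) + card {j\<in>{1..2*n}. j < v}"
    by (simp add: sum.distrib sum_distrib_left sum.inter_filter[symmetric])
  also have "card {j\<in>{1..2*n}. j < v} \<le> card {1..<v}"
    by (rule card_mono) auto
  finally have "v \<le> v - 1" by simp
  moreover have "v \<ge> 1" using big n by (cases v) auto
  ultimately show False by simp
qed

lemma two_power_le_central_binomial: "2 ^ n \<le> (2 * n choose n)"
proof -
  have "2 ^ n = (\<Sum>k\<le>n. n choose k)" by (simp add: choose_row_sum)
  also have "\<dots> \<le> (\<Sum>k\<le>n. (n choose k)\<^sup>2)"
    by (rule sum_mono) (simp add: power2_eq_square Suc_le_eq)
  also have "\<dots> = 2 * n choose n" by (rule choose_square_sum)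
  finally show ?thesis .
qed

definition primes_pi :: "nat \<Rightarrow> nat" where
  "primes_pi x = card {p. prime p \<and> p \<le> x}"

lemma two_power_le_primes_pi:
  fixes n :: nat
  assumes n: "n \<ge> 1"
  shows "2 ^ n \<le> (2 * n) ^ primes_pi (2 * n)"
proof -
  define C where "C = 2 * n choose n"
  have C_pos: "C > 0" by (simp add: C_def)
  have factors: "prime_factors C \<subseteq> {p. prime p \<and> p \<le> 2 * n}"
  proof
    fix p assume p: "p \<in> prime_factors C"
    then have "prime p" "p dvd C" by auto
    then have "multiplicity p C \<ge> 1"
      using C_pos by (simp add: Suc_le_eq prime_multiplicity_gt_zero_iff)
    then have "p ^ 1 \<le> p ^ multiplicity p C"
      using prime_gt_1_nat[OF \<open>prime p\<close>] by (intro power_increasing) auto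
    also have "\<dots> \<le> 2 * n"
      using prime_power_multiplicity_central_binomial_le[OF \<open>prime p\<close> n] by (simp add: C_def)
    finally show "p \<in> {p. prime p \<and> p \<le> 2 * n}" using \<open>prime p\<close> by simp
  qed
  have "2 ^ n \<le> C" unfolding C_def by (rule two_power_le_central_binomial)
  also have "C = (\<Prod>p\<in>prime_factors C. p ^ multiplicity p C)"
    using prime_factorization_nat[OF C_pos] .
  also have "\<dots> \<le> (\<Prod>p\<in>prime_factors C. 2 * n)"
    by (rule prod_mono) (use prime_power_multiplicity_central_binomial_le n in \<open>auto simp: C_def\<close>)
  also have "\<dots> = (2 * n) ^ card (prime_factors C)" by simp
  also have "\<dots> \<le> (2 * n) ^ primes_pi (2 * n)"
    unfolding primes_pi_def using n factors by (intro power_increasing card_mono) auto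
  finally show ?thesis .
qed

lemma infinite_primes_nat: "infinite {p::nat. prime p}"
  using primes_infinite by simp

lemma nth_prime_prime: "prime (nth_prime i)"
  unfolding nth_prime_def using enumerate_in_set[OF infinite_primes_nat] by blast

lemma nth_prime_ge: "i - 1 \<le> nth_prime i"
  unfolding nth_prime_def by (rule le_enumerate[OF infinite_primes_nat])

lemma nth_prime_ge_2: "2 \<le> nth_prime i"
  using nth_prime_prime by (rule prime_ge_2_nat)

lemma nth_prime_strict_mono: "1 \<le> i \<Longrightarrow> i < j \<Longrightarrow> nth_prime i < nth_prime j"
  unfolding nth_prime_def using infinite_primes_nat by simp

lemma nth_prime_ge_3:
  assumes "2 \<le> i"
  shows "3 \<le> nth_prime i"
proof -
  have "nth_prime 1 < nth_prime i" using assms by (intro nth_prime_strict_mono) auto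
  moreover have "2 \<le> nth_prime 1" by (rule nth_prime_ge_2)
  ultimately show ?thesis by linarith
qed

lemma nth_prime_le_if_le_primes_pi:
  assumes "1 \<le> i" "i \<le> primes_pi x"
  shows "nth_prime i \<le> x"
proof (rule ccontr)
  define S where "S = {p::nat. prime p}"
  assume "\<not> ?thesis"
  then have big: "x < enumerate S (i - 1)" by (simp add: nth_prime_def S_def)
  have "{p. prime p \<and> p \<le> x} \<subseteq> enumerate S ` {..<i - 1}"
  proof
    fix p assume "p \<in> {p. prime p \<and> p \<le> x}"
    then have "p \<in> S" "p \<le> x" by (auto simp: S_def)
    then obtain j where j: "enumerate S j = p"
      using enumerate_Ex infinite_primes_nat S_def by blast
    then have "enumerate S j < enumerate S (i - 1)" using big \<open>p \<le> x\<close> by simp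
    then have "j < i - 1" using infinite_primes_nat S_def by simp
    then show "p \<in> enumerate S ` {..<i - 1}" using j by blast
  qed
  then have "primes_pi x \<le> card (enumerate S ` {..<i - 1})"
    unfolding primes_pi_def by (intro card_mono) auto
  also have "\<dots> \<le> i - 1" using card_image_le[of "{..<i - 1}" "enumerate S"] by simp
  finally show False using assms by simp
qed

lemma nth_prime_Suc_bound:
  assumes k: "k \<ge> 1"
  shows "real (nth_prime (k + 1)) * ln 2 \<le> 4 * real k * ln (real (nth_prime (k + 1)))"
proof -
  define P where "P = nth_prime (k + 1)"
  define m where "m = (P - 1) div 2"
  have "P \<ge> 3" using nth_prime_ge_3 k by (simp add: P_def)
  then have "m \<ge> 1" by (simp add: m_def)
  then have m: "m \<ge> 1" "2 * m < P" "P \<le> 4 * m" using \<open>P \<ge> 3\<close> by (auto simp: m_def)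
  have "primes_pi (2 * m) \<le> k"
    using nth_prime_le_if_le_primes_pi[of "k + 1" "2 * m"] m by (force simp: P_def)
  then have "(2 * m) ^ primes_pi (2 * m) \<le> (2 * m) ^ k"
    using m(1) by (intro power_increasing) auto
  then have "2 ^ m \<le> (2 * m) ^ k"
    using two_power_le_primes_pi[OF m(1)] by (rule le_trans[rotated])
  then have "real (2 ^ m) \<le> real ((2 * m) ^ k)"
    by (simp only: of_nat_le_iff)
  then have "ln (real (2 ^ m)) \<le> ln (real ((2 * m) ^ k))"
    using m(1) by (subst ln_le_cancel_iff) auto
  moreover have "ln (real (2 ^ m)) = real m * ln 2"
    by (simp add: ln_realpow)
  moreover have "ln (real ((2 * m) ^ k)) = real k * ln (2 * real m)"
    using m(1) ln_realpow[of "2 * real m" k] by simp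
  ultimately have "real m * ln 2 \<le> real k * ln (2 * real m)"
    by simp
  also have "\<dots> \<le> real k * ln (real P)"
    using m by (intro mult_left_mono) auto
  finally have "real m * ln 2 \<le> real k * ln (real P)" .
  moreover have "real P * ln 2 \<le> 4 * real m * ln 2"
    using m(3) by (intro mult_right_mono) auto
  ultimately show ?thesis unfolding P_def by linarith
qed

section \<open>Exponents of a reduced number\<close>

lemma reduced_expo_1_bound:
  assumes "reduced n" "1 \<le> j" "expo n j = 0"
  shows "real (expo n 1) < 3 + 2 * ln (real (nth_prime j)) / ln 2"
proof -
  define P where "P = real (nth_prime j)"
  have "P \<ge> 2" using nth_prime_ge_2[of j] by (simp add: P_def)
  have "\<forall>j \<ge> 1. expo n j = 0 \<longrightarrow> (2::real) ^ expo n 1 < 8 * (real (nth_prime j))\<^sup>2"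
    using assms(1) unfolding reduced_def by blast
  then have "(2::real) ^ expo n 1 < 8 * P\<^sup>2"
    using assms(2,3) unfolding P_def by blast
  then have "ln (2 ^ expo n 1) < ln (8 * P\<^sup>2)"
    using \<open>P \<ge> 2\<close> by (subst ln_less_cancel_iff) auto
  moreover have "ln (8::real) = 3 * ln 2" using ln_realpow[of 2 3] by simp
  ultimately have "real (expo n 1) * ln 2 < 3 * ln 2 + 2 * ln P"
    using \<open>P \<ge> 2\<close> by (simp add: ln_mult ln_realpow)
  then show ?thesis unfolding P_def by (simp add: field_simps)
qed

lemma reduced_floor_bound:
  assumes "reduced n" "2 \<le> i" "2 \<le> j" "expo n j = 0"
  shows "real_of_int \<lfloor>(real (expo n i) + 1) / 2\<rfloor>
           < ln (real (nth_prime j)) / ln (real (nth_prime i))"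
proof -
  have "\<forall>i j. i \<ge> 2 \<longrightarrow> j \<ge> 2 \<longrightarrow>
          real_of_int \<lfloor>(real (expo n i) + 1) / (real (expo n j) + 2)\<rfloor>
            < ln (real (nth_prime j)) / ln (real (nth_prime i))"
    using assms(1) unfolding reduced_def by blast
  then have "real_of_int \<lfloor>(real (expo n i) + 1) / (real (expo n j) + 2)\<rfloor>
               < ln (real (nth_prime j)) / ln (real (nth_prime i))"
    using assms(2,3) by blast
  then show ?thesis using assms(4) by simp
qed

lemma reduced_expo_bound:
  assumes red: "reduced n" and i: "1 \<le> i" and j: "2 \<le> j" and zero: "expo n j = 0"
  shows "real (expo n i) \<le> 3 + 2 * ln (real (nth_prime j)) / ln 2"
proof (cases "i = 1")
  case True
  have "real (expo n 1) < 3 + 2 * ln (real (nth_prime j)) / ln 2"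
    using reduced_expo_1_bound[OF red _ zero] j by simp
  then show ?thesis using True by simp
next
  case False
  define a where "a = real (expo n i)"
  define P where "P = real (nth_prime j)"
  define q where "q = real (nth_prime i)"
  define L where "L = ln P / ln 2"
  have "P \<ge> 3" using nth_prime_ge_3 j by (simp add: P_def)
  have "q \<ge> 2" using nth_prime_ge_2[of i] by (simp add: q_def)
  have "(a - 1) / 2 < real_of_int \<lfloor>(a + 1) / 2\<rfloor>"
    using real_of_int_floor_gt_diff_one[of "(a + 1) / 2"] by (simp add: field_simps)
  also have "\<dots> < ln P / ln q"
    using reduced_floor_bound[OF red _ j zero] False i by (simp add: a_def P_def q_def)
  also have "\<dots> \<le> L"
    unfolding L_def using \<open>P \<ge> 3\<close> \<open>q \<ge> 2\<close> by (intro divide_left_mono mult_pos_pos) auto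
  finally have "a \<le> 3 + 2 * L" by (simp add: field_simps)
  then show ?thesis by (simp add: a_def L_def P_def)
qed

lemma reduced_index_bound:
  assumes red: "reduced n" and i: "1 \<le> i" and j: "2 \<le> j" and zero: "expo n j = 0"
    and large: "3 \<le> expo n i"
  shows "(i - 1)\<^sup>2 < nth_prime j"
proof (cases "i = 1")
  case True
  then show ?thesis using nth_prime_ge_3[OF j] by simp
next
  case False
  define P where "P = real (nth_prime j)"
  define q where "q = real (nth_prime i)"
  have "P \<ge> 3" using nth_prime_ge_3 j by (simp add: P_def)
  have "q \<ge> 2" using nth_prime_ge_2[of i] by (simp add: q_def)
  have "2 \<le> \<lfloor>(real (expo n i) + 1) / 2\<rfloor>" using large by (simp add: le_floor_iff)
  moreover have "real_of_int \<lfloor>(real (expo n i) + 1) / 2\<rfloor> < ln P / ln q"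
    using reduced_floor_bound[OF red _ j zero] False i by (simp add: P_def q_def)
  ultimately have "2 < ln P / ln q" by linarith
  then have "2 * ln q < ln P"
    using \<open>q \<ge> 2\<close> by (simp add: field_simps)
  then have "ln (q\<^sup>2) < ln P"
    using \<open>q \<ge> 2\<close> by (simp add: ln_realpow)
  then have "q\<^sup>2 < P" using \<open>q \<ge> 2\<close> \<open>P \<ge> 3\<close> by simp
  then have "nth_prime i ^ 2 < nth_prime j"
    unfolding P_def q_def by (metis of_nat_less_iff of_nat_power)
  moreover have "(i - 1)\<^sup>2 \<le> nth_prime i ^ 2" using nth_prime_ge power_mono by blast
  ultimately show ?thesis by linarith
qed

lemma reduced_large_expo_sum_bound:
  assumes red: "reduced n" and j: "2 \<le> j" and zero: "expo n j = 0"
  shows "real (\<Sum>i\<in>{i. 1 \<le> i \<and> i \<le> k \<and> expo n i \<ge> 3}. expo n i - 2)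
           \<le> 6 * sqrt (real (nth_prime j)) * ln (real (nth_prime j)) / ln 2"
proof -
  define S where "S = {i. 1 \<le> i \<and> i \<le> k \<and> expo n i \<ge> 3}"
  define P where "P = real (nth_prime j)"
  define m where "m = nat \<lfloor>sqrt P\<rfloor>"
  have "P \<ge> 3" using nth_prime_ge_3 j by (simp add: P_def)
  have "S \<subseteq> {1..m + 1}"
  proof
    fix i assume "i \<in> S"
    then have "(i - 1)\<^sup>2 < nth_prime j"
      using reduced_index_bound[OF red _ j zero, of i] by (simp add: S_def)
    then have "real (i - 1) ^ 2 < P"
      unfolding P_def by (metis of_nat_less_iff of_nat_power)
    then have "real (i - 1) < sqrt P" by (rule real_less_rsqrt)
    then have "i - 1 \<le> m" unfolding m_def by linarith
    then show "i \<in> {1..m + 1}" using \<open>i \<in> S\<close> by (simp add: S_def)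
  qed
  then have "card S \<le> m + 1" using card_mono[of "{1..m + 1}" S] by simp
  moreover have "real m \<le> sqrt P" unfolding m_def using \<open>P \<ge> 3\<close> by simp
  moreover have "sqrt P \<ge> 1" using \<open>P \<ge> 3\<close> by simp
  ultimately have card_S: "real (card S) \<le> 2 * sqrt P" by linarith
  have "ln P \<ge> ln 2" "ln P > 0" using \<open>P \<ge> 3\<close> by simp_all
  then have term_le: "real (expo n i - 2) \<le> 3 * ln P / ln 2" if "i \<in> S" for i
    using reduced_expo_bound[OF red _ j zero, of i] that unfolding S_def P_def
    by (simp add: of_nat_diff field_simps)
  have "real (\<Sum>i\<in>S. expo n i - 2) = (\<Sum>i\<in>S. real (expo n i - 2))" by simp
  also have "\<dots> \<le> real (card S) * (3 * ln P / ln 2)"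
    by (intro sum_bounded_above term_le)
  also have "\<dots> \<le> (2 * sqrt P) * (3 * ln P / ln 2)"
    using card_S \<open>ln P > 0\<close> by (intro mult_right_mono) auto
  finally show ?thesis unfolding S_def P_def by simp
qed

lemma cube_mult_ln_power_le:
  fixes P k :: real
  assumes P: "1 < P" and k: "0 < k" and cheb: "P * ln 2 \<le> 4 * k * ln P"
  shows "P ^ 3 * ln P ^ 8 \<le> 256 * 12 ^ 12 / ln 2 ^ 4 * k ^ 4"
proof -
  define l where "l = ln P"
  define c where "c = ln (2::real)"
  have "l > 0" "c > 0" using P by (simp_all add: l_def c_def)
  have "l powr 12 \<le> 12 powr 12 * P"
    unfolding l_def using ln_powr_bound2[of P 12] P by simp
  then have l12: "l ^ 12 \<le> 12 ^ 12 * P" using \<open>l > 0\<close> by (simp add: powr_numeral)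
  have "(P * c) ^ 4 \<le> (4 * k * l) ^ 4"
    using cheb P \<open>c > 0\<close> by (intro power_mono) (auto simp: l_def c_def)
  then have P4: "P ^ 4 * c ^ 4 \<le> 256 * k ^ 4 * l ^ 4" by (simp add: power_mult_distrib)
  have "(P ^ 3 * l ^ 8 * c ^ 4) * (P * l ^ 4) = P ^ 4 * c ^ 4 * l ^ 12" by algebra
  also have "\<dots> \<le> (256 * k ^ 4 * l ^ 4) * (12 ^ 12 * P)"
    by (rule mult_mono[OF P4 l12]) (use P \<open>l > 0\<close> in auto)
  also have "\<dots> = (256 * 12 ^ 12 * k ^ 4) * (P * l ^ 4)" by algebra
  finally have "P ^ 3 * l ^ 8 * c ^ 4 \<le> 256 * 12 ^ 12 * k ^ 4"
    using P \<open>l > 0\<close> by (simp add: mult_le_cancel_right_pos)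
  then show ?thesis
    using \<open>c > 0\<close> unfolding l_def c_def by (simp add: field_simps)
qed

lemma sqrt_mult_ln_le:
  fixes P k :: real
  assumes P: "1 < P" and k: "2 \<le> k" "k \<le> P" and cheb: "P * ln 2 \<le> 4 * k * ln P"
  shows "sqrt P * ln P \<le> root 6 (256 * 12 ^ 12 / ln 2 ^ 4) * k powr (2/3) / ln k powr (1/3)"
    (is "?T \<le> ?R")
proof -
  define D where "D = (256::real) * 12 ^ 12 / ln 2 ^ 4"
  have "ln k > 0" "ln k \<le> ln P" using k by simp_all
  have "sqrt P ^ 6 = (sqrt P ^ 2) ^ 3" by (simp flip: power_mult)
  then have "sqrt P ^ 6 = P ^ 3" using P by simp
  then have "?T ^ 6 * ln k ^ 2 = P ^ 3 * ln P ^ 6 * ln k ^ 2"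
    by (simp add: power_mult_distrib)
  also have "\<dots> \<le> P ^ 3 * ln P ^ 6 * ln P ^ 2"
    using \<open>ln k > 0\<close> \<open>ln k \<le> ln P\<close> P by (intro mult_left_mono power_mono) auto
  also have "\<dots> = P ^ 3 * ln P ^ 8" by simp
  also have "\<dots> \<le> D * k ^ 4"
    unfolding D_def using cube_mult_ln_power_le[OF P _ cheb] k by simp
  finally have "?T ^ 6 \<le> D * k ^ 4 / ln k ^ 2"
    using \<open>ln k > 0\<close> by (simp add: pos_le_divide_eq)
  also have "D * k ^ 4 / ln k ^ 2 = ?R ^ 6"
  proof -
    have "(k powr (2/3)) ^ 6 = k ^ 4" "(ln k powr (1/3)) ^ 6 = ln k ^ 2"
      using k \<open>ln k > 0\<close> by (simp_all add: powr_power powr_numeral)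
    moreover have "root 6 D ^ 6 = D" by (simp add: D_def)
    ultimately show ?thesis by (simp add: D_def power_mult_distrib power_divide)
  qed
  finally show ?thesis
    using power_le_imp_le_base[of ?T 5 ?R] k by (simp add: numeral_eq_Suc)
qed

theorem lemma3p14:
  shows "\<exists>C>0. \<forall>k::nat. k \<ge> 2 \<longrightarrow> (\<forall>n. reduced n \<longrightarrow> (\<forall>i>k. expo n i = 0) \<longrightarrow>
      real (\<Sum>i\<in>{i. 1 \<le> i \<and> i \<le> k \<and> expo n i \<ge> 3}. expo n i - 2)
        \<le> C * real k powr (2/3) / ln (real k) powr (1/3))"
proof (intro exI conjI allI impI)
  define C where "C = 6 / ln 2 * root 6 (256 * 12 ^ 12 / ln 2 ^ 4)"
  show "C > 0" by (simp add: C_def)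
  fix k :: nat and n
  assume k: "k \<ge> 2" and red: "reduced n" and supp: "\<forall>i>k. expo n i = 0"
  define P where "P = real (nth_prime (k + 1))"
  have "P \<ge> 3" using nth_prime_ge_3[of "k + 1"] k by (simp add: P_def)
  have "real k \<le> P" using nth_prime_ge[of "k + 1"] by (simp add: P_def)
  have "real (\<Sum>i\<in>{i. 1 \<le> i \<and> i \<le> k \<and> expo n i \<ge> 3}. expo n i - 2)
          \<le> 6 * sqrt P * ln P / ln 2"
    unfolding P_def using k supp by (intro reduced_large_expo_sum_bound[OF red]) auto
  also have "\<dots> = 6 / ln 2 * (sqrt P * ln P)" by simp
  also have "\<dots> \<le> 6 / ln 2 * (root 6 (256 * 12 ^ 12 / ln 2 ^ 4) * k powr (2/3) / ln k powr (1/3))"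
    using nth_prime_Suc_bound[of k] k \<open>P \<ge> 3\<close> \<open>real k \<le> P\<close>
    by (intro mult_left_mono sqrt_mult_ln_le) (auto simp: P_def)
  also have "6 / ln 2 * (root 6 (256 * 12 ^ 12 / ln 2 ^ 4) * k powr (2/3) / ln k powr (1/3))
               = C * real k powr (2/3) / ln (real k) powr (1/3)"
    by (simp add: C_def)
  finally show "real (\<Sum>i\<in>{i. 1 \<le> i \<and> i \<le> k \<and> expo n i \<ge> 3}. expo n i - 2)
      \<le> C * real k powr (2/3) / ln (real k) powr (1/3)" .
qed

end
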